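(* Let $S=\{z\in\mathbb{C}: |\operatorname{Arg} z|\geq 3\pi/4\}$. For every $z\in S$ one has $\operatorname{Re}(\operatorname{erfc}(z))\geq 1$, where $\operatorname{erfc}(z)=\frac{2}{\sqrt{\pi}}\int_z^{\infty}e^{-u^2}\,du$. Moreover, equality $\operatorname{Re}(\operatorname{erfc}(z))=1$ holds for $z\in S$ if and only if $z=0$.
   Context: $\operatorname{Arg} z$ denotes the principal argument of $z$, taking values in $(-\pi,\pi]$; the point $z=0$ is regarded as belonging to $S$. The complementary error function $\operatorname{erfc}$ is the entire function $\operatorname{erfc}(z)=1-\operatorname{erf}(z)$ with $\operatorname{erf}(z)=\frac{2}{\sqrt{\pi}}\int_0^z e^{-u^2}\,du$ (integral along any path from $0$ to $z$). *)

theory Defs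
  imports "HOL-Complex_Analysis.Complex_Analysis"
begin

text \<open>Error function: (2/sqrt pi) times the integral of exp(-u^2) from 0 to z,
  taken along the straight segment (the integrand is entire, so any path gives the same value).\<close>
definition cerf :: "complex \<Rightarrow> complex" where
  "cerf z = (2 / of_real (sqrt pi)) * contour_integral (linepath 0 z) (\<lambda>u. exp (- (u ^ 2)))"

definition cerfc :: "complex \<Rightarrow> complex" where
  "cerfc z = 1 - cerf z"

text \<open>The sector S; 0 is included explicitly (Arg 0 = 0 in the library).\<close>
definition sectorS :: "complex set" where
  "sectorS = {z. z = 0 \<or> \<bar>Arg z\<bar> \<ge> 3 * pi / 4}"

end

theory Submission
  imports Defs
begin

text \<open>Let F(z) be the integral of exp(-u^2) from 0 to z, so that Re (erfc z) = 1 - (2/sqrt pi) Re F(z),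
  and write a nonzero z in S as z = -a + ib with |b| <= a. Along the vertical segment from -a to z,
  Re F changes by minus the integral of exp(s^2 - a^2) sin(2as) from 0 to b, which is at most
  (exp(b^2 - a^2) - exp(-a^2))/a <= (1 - exp(-a^2))/a. On the real axis, Re F(-a) is minus the
  integral of exp(-t^2) from 0 to a, and a times that integral exceeds 1 - exp(-a^2). Hence
  Re F(z) < 0.\<close>

lemma has_field_derivative_linepath_integral:
  fixes f :: "complex \<Rightarrow> complex"
  assumes holf: "f holomorphic_on S" and S: "open S" "convex S" "a \<in> S" "x \<in> S"
  shows "((\<lambda>x. contour_integral (linepath a x) f) has_field_derivative f x) (at x)"
proof (rule triangle_contour_integrals_starlike_primitive[OF _ \<open>a \<in> S\<close> \<open>open S\<close> \<open>x \<in> S\<close>])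
  show "continuous_on S f"
    using holf by (rule holomorphic_on_imp_continuous_on)
  show "closed_segment a y \<subseteq> S" if "y \<in> S" for y
    using S that by (simp add: closed_segment_subset)
  fix b c
  assume bc: "closed_segment b c \<subseteq> S"
  then have "b \<in> S" "c \<in> S"
    by (auto dest: subsetD[OF _ ends_in_segment(1)] subsetD[OF _ ends_in_segment(2)])
  then have "path_image (linepath a b +++ linepath b c +++ linepath c a) \<subseteq> S"
    using S bc by (simp add: path_image_join closed_segment_subset)
  then have "(f has_contour_integral 0) (linepath a b +++ linepath b c +++ linepath c a)"
    by (intro Cauchy_theorem_convex_simple[OF holf \<open>convex S\<close>]) auto
  then show "contour_integral (linepath a b) f + contour_integral (linepath b c) f +
      contour_integral (linepath c a) f = 0"
    by (rule has_chain_integral_chain_integral3)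
qed

lemma has_real_derivative_Re_along_line:
  fixes F :: "complex \<Rightarrow> complex"
  assumes "(F has_field_derivative D) (at (c + w * of_real t))"
  shows "((\<lambda>s. Re (F (c + w * of_real s))) has_real_derivative Re (w * D)) (at t)"
proof -
  have "((\<lambda>v. F (c + w * v)) has_field_derivative D * w) (at (of_real t))"
    using assms by (intro DERIV_chain2[of F]) (auto intro!: derivative_eq_intros)
  then have "((\<lambda>s. F (c + w * of_real s)) has_vector_derivative D * w) (at t)"
    by (rule has_vector_derivative_real_field)
  then show ?thesis
    using has_field_derivative_Re by (fastforce simp: mult.commute)
qed

definition gauss_primitive :: "complex \<Rightarrow> complex" where
  "gauss_primitive z = contour_integral (linepath 0 z) (\<lambda>u. exp (- (u ^ 2)))"

lemma gauss_primitive_0 [simp]: "gauss_primitive 0 = 0"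
  by (simp add: gauss_primitive_def)

lemma has_field_derivative_gauss_primitive:
  "(gauss_primitive has_field_derivative exp (- (z ^ 2))) (at z)"
  unfolding gauss_primitive_def[abs_def]
  by (rule has_field_derivative_linepath_integral[where S = UNIV]) (auto intro!: holomorphic_intros)

lemma Re_cerfc_eq: "Re (cerfc z) = 1 - 2 / sqrt pi * Re (gauss_primitive z)"
  by (simp add: cerfc_def cerf_def gauss_primitive_def)

lemma exp_neg_sq_primitive_lower_bound:
  fixes R :: "real \<Rightarrow> real"
  assumes R': "\<And>t. (R has_real_derivative exp (- (t ^ 2))) (at t)" and "R 0 = 0" and "a > 0"
  shows "1 - exp (- (a ^ 2)) < a * R a"
proof -
  define M where "M x = R x - x * exp (- (x ^ 2))" for x
  define Q where "Q x = x * R x - 1 + exp (- (x ^ 2))" for x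
  have M': "(M has_real_derivative 2 * x ^ 2 * exp (- (x ^ 2))) (at x)" for x
    unfolding M_def
    by (rule derivative_eq_intros R' refl | simp)+ (simp add: algebra_simps power2_eq_square)
  have Q': "(Q has_real_derivative M x) (at x)" for x
    unfolding Q_def M_def by (rule derivative_eq_intros R' refl | simp)+
  have cont_M: "continuous_on A M" and cont_Q: "continuous_on A Q" for A
    using M' Q' by (auto intro: DERIV_isCont continuous_at_imp_continuous_on)
  have M_pos: "M x > 0" if "x > 0" for x
  proof -
    have "M 0 < M x"
    proof (rule DERIV_pos_imp_increasing_open[OF that _ cont_M])
      fix y :: real
      assume "0 < y"
      then show "\<exists>D. (M has_real_derivative D) (at y) \<and> 0 < D"
        using M' by (intro exI[of _ "2 * y ^ 2 * exp (- (y ^ 2))"] conjI) auto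
    qed
    then show ?thesis by (simp add: M_def \<open>R 0 = 0\<close>)
  qed
  have "Q 0 < Q a"
  proof (rule DERIV_pos_imp_increasing_open[OF \<open>a > 0\<close> _ cont_Q])
    fix y :: real
    assume "0 < y"
    then show "\<exists>D. (Q has_real_derivative D) (at y) \<and> 0 < D"
      using Q' M_pos by blast
  qed
  then show ?thesis by (simp add: Q_def \<open>R 0 = 0\<close>)
qed

text \<open>With f(s) = exp(s^2 - a^2) and G(s) = (1 - cos(2as))/(2a), which lies in [0, 1/a] and has
  derivative sin(2as), the function f (1/a - G) - g has derivative 2 s f (1/a - G), of the sign of s;
  so it is minimal at 0.\<close>
lemma exp_sin_primitive_upper_bound:
  fixes g :: "real \<Rightarrow> real"
  assumes g': "\<And>s. (g has_real_derivative - (exp (s ^ 2 - a ^ 2) * sin (2 * a * s))) (at s)"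
    and "a > 0"
  shows "g b \<le> g 0 + (exp (b ^ 2 - a ^ 2) - exp (- (a ^ 2))) / a"
proof -
  define f where "f s = exp (s ^ 2 - a ^ 2)" for s
  define G where "G s = (1 - cos (2 * a * s)) / (2 * a)" for s
  define P where "P s = f s * (1 / a - G s) - g s" for s
  have P': "(P has_real_derivative s * (2 * f s * (1 / a - G s))) (at s)" for s
    unfolding P_def f_def G_def using \<open>a > 0\<close>
    by (auto intro!: derivative_eq_intros g' simp: field_simps power2_eq_square)
  have G_bounds: "0 \<le> G s" "G s \<le> 1 / a" for s
    using \<open>a > 0\<close> cos_ge_minus_one[of "2 * a * s"] cos_le_one[of "2 * a * s"]
    by (auto simp: G_def divide_simps)
  have f_pos: "f s > 0" for s
    by (simp add: f_def)
  have cont_P: "continuous_on A P" for A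
    using P' by (auto intro: DERIV_isCont continuous_at_imp_continuous_on)
  have weight_nonneg: "0 \<le> 2 * f s * (1 / a - G s)" for s
    using f_pos[of s] G_bounds(2)[of s] by simp
  have "P 0 \<le> P b"
  proof (cases "b \<ge> 0")
    case True
    show ?thesis
    proof (rule DERIV_nonneg_imp_increasing_open[OF True _ cont_P])
      fix x :: real
      assume "0 < x"
      then show "\<exists>D. (P has_real_derivative D) (at x) \<and> 0 \<le> D"
        using P' weight_nonneg by (intro exI conjI) (auto intro: mult_nonneg_nonneg)
    qed
  next
    case False
    show ?thesis
    proof (rule DERIV_nonpos_imp_decreasing_open[of b 0, OF _ _ cont_P])
      fix x :: real
      assume "x < 0"
      then show "\<exists>D. (P has_real_derivative D) (at x) \<and> D \<le> 0"
        using P' weight_nonneg by (intro exI conjI) (auto intro: mult_nonpos_nonneg)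
    qed (use False in simp)
  qed
  have "g b = f b * (1 / a - G b) - P b"
    by (simp add: P_def)
  also have "\<dots> \<le> f b / a - P 0"
    using \<open>P 0 \<le> P b\<close> f_pos[of b] G_bounds(1)[of b]
    by (simp add: algebra_simps add_increasing2)
  also have "\<dots> = g 0 + (f b - f 0) / a"
    by (simp add: P_def G_def diff_divide_distrib)
  finally show ?thesis
    by (simp add: f_def)
qed

lemma cos_neg_and_sin_le_neg_cos:
  fixes t :: real
  assumes "3 * pi / 4 \<le> t" "t \<le> pi"
  shows "cos t < 0" "sin t \<le> - cos t"
proof -
  define u where "u = pi - t"
  have u: "0 \<le> u" "u \<le> pi / 4"
    using assms by (auto simp: u_def)
  have "cos u > 0"
    using u pi_gt_zero by (intro cos_gt_zero_pi) linarith+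
  moreover have "sin u \<le> sin (pi / 4)" "cos (pi / 4) \<le> cos u"
    using u by (simp_all add: sin_mono_le_eq cos_mono_le_eq)
  moreover have "cos t = - cos u" "sin t = sin u"
    by (simp_all add: u_def)
  ultimately show "cos t < 0" "sin t \<le> - cos t"
    by (simp_all add: cos_45 sin_45)
qed

lemma sectorS_Re_Im:
  assumes "z \<in> sectorS" "z \<noteq> 0"
  shows "Re z < 0" "\<bar>Im z\<bar> \<le> - Re z"
proof -
  define t where "t = \<bar>Arg z\<bar>"
  have t: "3 * pi / 4 \<le> t" "t \<le> pi"
    using assms Arg_bounded[of z] by (auto simp: sectorS_def t_def)
  have Re_z: "Re z = norm z * cos t"
    using cos_Arg[OF \<open>z \<noteq> 0\<close>] by (simp add: t_def abs_if)
  have "\<bar>sin (Arg z)\<bar> = sin t"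
    using t sin_ge_zero[of t] by (cases "Arg z \<ge> 0") (simp_all add: t_def)
  then have Im_z: "\<bar>Im z\<bar> = norm z * sin t"
    using sin_Arg[OF \<open>z \<noteq> 0\<close>] \<open>z \<noteq> 0\<close> by (simp add: field_simps)
  have "norm z > 0"
    using \<open>z \<noteq> 0\<close> by simp
  then show "Re z < 0"
    using cos_neg_and_sin_le_neg_cos(1)[OF t] by (simp add: Re_z mult_pos_neg)
  show "\<bar>Im z\<bar> \<le> - Re z"
    using \<open>norm z > 0\<close> cos_neg_and_sin_le_neg_cos(2)[OF t]
    unfolding Re_z Im_z minus_mult_right by (rule mult_left_mono[OF _ less_imp_le, rotated])
qed

lemma has_real_derivative_Re_gauss_primitive_neg_real:
  "((\<lambda>s. - Re (gauss_primitive (- of_real s))) has_real_derivative exp (- (t ^ 2))) (at t)"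
proof -
  have "((\<lambda>s. Re (gauss_primitive (0 + (- 1) * of_real s))) has_real_derivative
      Re ((- 1) * exp (- ((0 + (- 1) * of_real t) ^ 2)))) (at t)"
    by (intro has_real_derivative_Re_along_line has_field_derivative_gauss_primitive)
  then have "((\<lambda>s. - Re (gauss_primitive (0 + (- 1) * of_real s))) has_real_derivative
      - Re ((- 1) * exp (- ((0 + (- 1) * of_real t) ^ 2)))) (at t)"
    by (rule DERIV_minus)
  moreover have "exp (- ((0 + (- 1) * of_real t) ^ 2)) = complex_of_real (exp (- (t ^ 2)))"
    by (simp flip: exp_of_real)
  ultimately show ?thesis
    by simp
qed

lemma has_real_derivative_Re_gauss_primitive_vertical:
  "((\<lambda>s. Re (gauss_primitive (- of_real a + \<i> * of_real s))) has_real_derivative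
      - (exp (s ^ 2 - a ^ 2) * sin (2 * a * s))) (at s)"
proof -
  have "((\<lambda>s. Re (gauss_primitive (- of_real a + \<i> * of_real s))) has_real_derivative
      Re (\<i> * exp (- ((- of_real a + \<i> * of_real s) ^ 2)))) (at s)"
    by (intro has_real_derivative_Re_along_line has_field_derivative_gauss_primitive)
  moreover have "Re (\<i> * exp (- ((- of_real a + \<i> * of_real s) ^ 2))) =
      - (exp (s ^ 2 - a ^ 2) * sin (2 * a * s))"
    by (simp add: power2_eq_square Im_exp algebra_simps)
  ultimately show ?thesis
    by simp
qed

lemma Re_gauss_primitive_neg:
  assumes "z \<in> sectorS" "z \<noteq> 0"
  shows "Re (gauss_primitive z) < 0"
proof -
  define a where "a = - Re z"
  define b where "b = Im z"
  have "a > 0" "\<bar>b\<bar> \<le> a"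
    using sectorS_Re_Im[OF assms] by (simp_all add: a_def b_def)
  have z: "z = - of_real a + \<i> * of_real b"
    by (simp add: a_def b_def complex_eq_iff)
  have "1 - exp (- (a ^ 2)) < a * - Re (gauss_primitive (- of_real a))"
    using exp_neg_sq_primitive_lower_bound[OF has_real_derivative_Re_gauss_primitive_neg_real _ \<open>a > 0\<close>]
    by simp
  then have real_axis: "Re (gauss_primitive (- of_real a)) + (1 - exp (- (a ^ 2))) / a < 0"
    using \<open>a > 0\<close> by (simp add: field_simps)
  have "exp (b ^ 2 - a ^ 2) \<le> 1"
    using power_mono[OF \<open>\<bar>b\<bar> \<le> a\<close>, of 2] by simp
  have "Re (gauss_primitive z) \<le>
      Re (gauss_primitive (- of_real a)) + (exp (b ^ 2 - a ^ 2) - exp (- (a ^ 2))) / a"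
    using exp_sin_primitive_upper_bound[OF has_real_derivative_Re_gauss_primitive_vertical \<open>a > 0\<close>, of b]
    by (simp add: z)
  also have "\<dots> \<le> Re (gauss_primitive (- of_real a)) + (1 - exp (- (a ^ 2))) / a"
    using \<open>exp (b ^ 2 - a ^ 2) \<le> 1\<close> \<open>a > 0\<close> by (simp add: divide_right_mono)
  also have "\<dots> < 0"
    by (rule real_axis)
  finally show ?thesis .
qed

theorem mainTheorem1:
  shows "(\<forall>z\<in>sectorS. Re (cerfc z) \<ge> 1) \<and>
         (\<forall>z\<in>sectorS. Re (cerfc z) = 1 \<longleftrightarrow> z = 0)"
proof -
  have "Re (cerfc z) > 1" if "z \<in> sectorS" "z \<noteq> 0" for z
    using Re_gauss_primitive_neg[OF that] by (simp add: Re_cerfc_eq divide_neg_pos)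
  moreover have "Re (cerfc 0) = 1"
    by (simp add: Re_cerfc_eq)
  ultimately show ?thesis
    by (metis order.strict_iff_not order_refl)
qed

end
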